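(* Let $P=(N,L)$ be a filtration pair for $f$ (for some isolated invariant set), let $N_L=N/L$ be the quotient space in which $L$ is collapsed to a point $[L]$ taken as base point (if $L=\emptyset$, $N_L$ is the disjoint union of $N$ and a single point $[L]$), and let $p:N\to N_L$ be the quotient map. Then the map $f_P:N_L\to N_L$ given by $f_P([L])=[L]$ and $f_P(p(x))=p(f(x))$ for $x\in N\setminus L$ is a well-defined continuous base-point preserving map, and $[L]\in\operatorname{Int} f_P^{-1}([L])$.
   Context: Let $X$ be a locally compact metric space, $U\subset X$ open and $f:U\to X$ continuous. For $N\subset U$, a solution through $x$ is a map $\sigma:\mathbb Z\to U$ with $\sigma(0)=x$ and $f(\sigma(n))=\sigma(n+1)$ for all $n$; $\operatorname{Inv} N$ is the set of $x\in N$ admitting a solution through $x$ with all values in $N$. A compact set $N\subset U$ is an isolating neighborhood if $\operatorname{Inv} N\subset\operatorname{Int} N$; a set $S$ is an isolated invariant set if $S=\operatorname{Inv} N$ for some isolating neighborhood $N$. The exit set of $N$ is $N^-=\{x\in N: f(x)\notin\operatorname{Int} N\}$. A filtration pair for an isolated invariant set $S$ is a pair of compact sets $L\subset N$ contained in the interior of the domain of $f$, each equal to the closure of its interior, such that (1) $\operatorname{cl}(N\setminus L)$ is an isolating neighborhood with $\operatorname{Inv}\operatorname{cl}(N\setminus L)=S$; (2) $L$ is a neighborhood of $N^-$ in $N$; (3) $f(L)\cap\operatorname{cl}(N\setminus L)=\emptyset$. *)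

theory Defs
  imports "HOL-Analysis.Analysis"
begin

definition is_solution :: "('a \<Rightarrow> 'a) \<Rightarrow> 'a set \<Rightarrow> (int \<Rightarrow> 'a) \<Rightarrow> 'a \<Rightarrow> bool" where
  "is_solution f U \<sigma> x \<longleftrightarrow> \<sigma> 0 = x \<and> (\<forall>n. \<sigma> n \<in> U \<and> f (\<sigma> n) = \<sigma> (n + 1))"

definition Inv :: "('a \<Rightarrow> 'a) \<Rightarrow> 'a set \<Rightarrow> 'a set \<Rightarrow> 'a set" where
  "Inv f U N = {x \<in> N. \<exists>\<sigma>. is_solution f U \<sigma> x \<and> (\<forall>n. \<sigma> n \<in> N)}"

definition isolating_nbhd :: "('a::metric_space \<Rightarrow> 'a) \<Rightarrow> 'a set \<Rightarrow> 'a set \<Rightarrow> bool" where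
  "isolating_nbhd f U N \<longleftrightarrow> compact N \<and> N \<subseteq> U \<and> Inv f U N \<subseteq> interior N"

definition isolated_invariant_set :: "('a::metric_space \<Rightarrow> 'a) \<Rightarrow> 'a set \<Rightarrow> 'a set \<Rightarrow> bool" where
  "isolated_invariant_set f U S \<longleftrightarrow> (\<exists>N. isolating_nbhd f U N \<and> S = Inv f U N)"

definition exit_set :: "('a::metric_space \<Rightarrow> 'a) \<Rightarrow> 'a set \<Rightarrow> 'a set" where
  "exit_set f N = {x \<in> N. f x \<notin> interior N}"

definition filtration_pair ::
  "('a::metric_space \<Rightarrow> 'a) \<Rightarrow> 'a set \<Rightarrow> 'a set \<Rightarrow> 'a set \<Rightarrow> 'a set \<Rightarrow> bool" where
  "filtration_pair f U S N L \<longleftrightarrow>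
     compact L \<and> compact N \<and> L \<subseteq> N \<and> N \<subseteq> interior U \<and>
     closure (interior N) = N \<and> closure (interior L) = L \<and>
     isolating_nbhd f U (closure (N - L)) \<and> Inv f U (closure (N - L)) = S \<and>
     (\<exists>V. openin (top_of_set N) V \<and> exit_set f N \<subseteq> V \<and> V \<subseteq> L) \<and>
     f ` L \<inter> closure (N - L) = {}"

text \<open>The pointed quotient space N/L. Its points are represented in 'a option:
  None is the base point [L], and Some x is the class of x \<in> N - L.
  (If L is empty, None is an extra isolated point.)\<close>

definition quot_proj :: "'a set \<Rightarrow> 'a \<Rightarrow> 'a option" where
  "quot_proj L x = (if x \<in> L then None else Some x)"

definition quot_carrier :: "'a set \<Rightarrow> 'a set \<Rightarrow> 'a option set" where
  "quot_carrier N L = insert None (Some ` (N - L))"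

definition quot_space :: "'a::topological_space set \<Rightarrow> 'a set \<Rightarrow> 'a option topology" where
  "quot_space N L = topology (\<lambda>V. V \<subseteq> quot_carrier N L \<and>
      openin (top_of_set N) {x \<in> N. quot_proj L x \<in> V})"

definition index_map :: "('a \<Rightarrow> 'a) \<Rightarrow> 'a set \<Rightarrow> 'a option \<Rightarrow> 'a option" where
  "index_map f L y = (case y of None \<Rightarrow> None | Some x \<Rightarrow> quot_proj L (f x))"

end

(* Since the exit set of N lies in L, f maps N - L into the interior of N, hence by
   continuity maps closure (N - L) into N; as f L misses closure (N - L), f maps
   L \<inter> closure (N - L) into L. So the map that is the base point on L and p \<circ> f on
   closure (N - L) is well defined on N, continuous by pasting along this closed cover,
   and it factors through N/L as f_P. The points of N sent by f outside closure (N - L)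
   form a neighbourhood of L in N, whose image in N/L is a neighbourhood of the base
   point collapsed by f_P. *)

theory Submission
  imports Defs
begin

lemma openin_quot_space:
  "openin (quot_space N L) V \<longleftrightarrow>
     V \<subseteq> quot_carrier N L \<and> openin (top_of_set N) {x \<in> N. quot_proj L x \<in> V}"
proof -
  have "istopology (\<lambda>V. V \<subseteq> quot_carrier N L \<and>
                        openin (top_of_set N) {x \<in> N. quot_proj L x \<in> V})"
    unfolding istopology_def
  proof (rule conjI; intro allI impI)
    fix V W
    assume "V \<subseteq> quot_carrier N L \<and> openin (top_of_set N) {x \<in> N. quot_proj L x \<in> V}"
      and "W \<subseteq> quot_carrier N L \<and> openin (top_of_set N) {x \<in> N. quot_proj L x \<in> W}"
    moreover have "{x \<in> N. quot_proj L x \<in> V \<inter> W} =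
        {x \<in> N. quot_proj L x \<in> V} \<inter> {x \<in> N. quot_proj L x \<in> W}"
      by auto
    ultimately show "V \<inter> W \<subseteq> quot_carrier N L \<and>
        openin (top_of_set N) {x \<in> N. quot_proj L x \<in> V \<inter> W}"
      by auto
  next
    fix \<V>
    assume "\<forall>V\<in>\<V>. V \<subseteq> quot_carrier N L \<and> openin (top_of_set N) {x \<in> N. quot_proj L x \<in> V}"
    moreover have "{x \<in> N. quot_proj L x \<in> \<Union>\<V>} = (\<Union>V\<in>\<V>. {x \<in> N. quot_proj L x \<in> V})"
      by auto
    ultimately show "\<Union>\<V> \<subseteq> quot_carrier N L \<and>
        openin (top_of_set N) {x \<in> N. quot_proj L x \<in> \<Union>\<V>}"
      by auto
  qed
  then show ?thesis
    by (simp add: quot_space_def topology_inverse')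
qed

lemma quot_proj_in_quot_carrier: "x \<in> N \<Longrightarrow> quot_proj L x \<in> quot_carrier N L"
  by (simp add: quot_proj_def quot_carrier_def)

lemma topspace_quot_space: "topspace (quot_space N L) = quot_carrier N L"
proof (rule subset_antisym)
  show "topspace (quot_space N L) \<subseteq> quot_carrier N L"
    using openin_topspace[of "quot_space N L"] unfolding openin_quot_space by (rule conjunct1)
  have "{x \<in> N. quot_proj L x \<in> quot_carrier N L} = N"
    by (auto simp: quot_proj_in_quot_carrier)
  then have "openin (quot_space N L) (quot_carrier N L)"
    by (simp add: openin_quot_space)
  then show "quot_carrier N L \<subseteq> topspace (quot_space N L)"
    by (rule openin_subset)
qed

lemma continuous_map_quot_proj:
  "continuous_map (top_of_set N) (quot_space N L) (quot_proj L)"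
  unfolding continuous_map_def
proof (intro conjI allI impI)
  show "quot_proj L \<in> topspace (top_of_set N) \<rightarrow> topspace (quot_space N L)"
    by (auto simp: topspace_quot_space quot_proj_in_quot_carrier)
  fix V
  assume "openin (quot_space N L) V"
  then show "openin (top_of_set N) {x \<in> topspace (top_of_set N). quot_proj L x \<in> V}"
    by (simp add: openin_quot_space)
qed

lemma continuous_map_from_quot_space:
  assumes "h ` quot_carrier N L \<subseteq> topspace X"
    and "continuous_map (top_of_set N) X (h \<circ> quot_proj L)"
  shows "continuous_map (quot_space N L) X h"
  unfolding continuous_map_def
proof (intro conjI allI impI)
  show "h \<in> topspace (quot_space N L) \<rightarrow> topspace X"
    using assms(1) by (auto simp: topspace_quot_space)
next
  fix V
  assume "openin X V"
  then have "openin (top_of_set N) {x \<in> N. h (quot_proj L x) \<in> V}"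
    using assms(2) by (simp add: continuous_map_def)
  moreover have "{x \<in> N. quot_proj L x \<in> {y \<in> quot_carrier N L. h y \<in> V}} =
      {x \<in> N. h (quot_proj L x) \<in> V}"
    by (auto simp: quot_proj_in_quot_carrier)
  ultimately show "openin (quot_space N L) {y \<in> topspace (quot_space N L). h y \<in> V}"
    by (simp add: openin_quot_space topspace_quot_space)
qed

lemma openin_quot_space_collapse:
  assumes "openin (top_of_set N) W" and "L \<subseteq> W"
  shows "openin (quot_space N L) (insert None (Some ` (W - L)))"
proof -
  have "W \<subseteq> N"
    using assms(1) by (rule openin_imp_subset)
  then have "{x \<in> N. quot_proj L x \<in> insert None (Some ` (W - L))} = W"
    using assms(2) by (auto simp: quot_proj_def)
  with \<open>W \<subseteq> N\<close> show ?thesis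
    by (auto simp: openin_quot_space assms(1) quot_carrier_def)
qed

lemma index_map_quot_proj:
  "index_map f L (quot_proj L x) = (if x \<in> L then None else quot_proj L (f x))"
  by (simp add: index_map_def quot_proj_def)

lemma filtration_pair_image_in_interior:
  assumes "filtration_pair f U S N L" and "x \<in> N - L"
  shows "f x \<in> interior N"
  using assms unfolding filtration_pair_def exit_set_def by blast

lemma filtration_pair_continuous_on:
  assumes "filtration_pair f U S N L" and "continuous_on U f"
  shows "continuous_on N f"
  using assms unfolding filtration_pair_def
  by (meson continuous_on_subset interior_subset order_trans)

lemma filtration_pair_image_closure_subset:
  assumes "filtration_pair f U S N L" and "continuous_on U f"
  shows "f ` closure (N - L) \<subseteq> N"
proof -
  have "closed N"
    using assms(1) by (simp add: filtration_pair_def compact_imp_closed)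
  then have "closure (N - L) \<subseteq> N"
    by (simp add: closure_minimal)
  with filtration_pair_continuous_on[OF assms] have "continuous_on (closure (N - L)) f"
    by (rule continuous_on_subset)
  moreover have "f ` (N - L) \<subseteq> N"
    using filtration_pair_image_in_interior[OF assms(1)] interior_subset by blast
  ultimately show ?thesis
    using \<open>closed N\<close> image_closure_subset by blast
qed

lemma filtration_pair_image_frontier:
  assumes "filtration_pair f U S N L" and "continuous_on U f"
    and "x \<in> L" and "x \<in> closure (N - L)"
  shows "f x \<in> L"
proof -
  have "f x \<in> N"
    using filtration_pair_image_closure_subset[OF assms(1,2)] assms(4) by blast
  moreover have "f x \<notin> closure (N - L)"
    using assms(1,3) by (auto simp: filtration_pair_def)
  ultimately show ?thesis
    using closure_subset[of "N - L"] by blast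
qed

lemma continuous_map_index_map:
  assumes "filtration_pair f U S N L" and "continuous_on U f"
  shows "continuous_map (quot_space N L) (quot_space N L) (index_map f L)"
proof (rule continuous_map_from_quot_space)
  have "f x \<in> N" if "x \<in> N - L" for x
    using filtration_pair_image_in_interior[OF assms(1) that] interior_subset by blast
  then show "index_map f L ` quot_carrier N L \<subseteq> topspace (quot_space N L)"
    by (auto simp: quot_carrier_def index_map_def topspace_quot_space quot_proj_def
             split: if_split_asm)
  define C where "C = closure (N - L)"
  have "closed L" "C \<subseteq> N"
    using assms(1) by (auto simp: filtration_pair_def C_def compact_imp_closed closure_minimal)
  have "continuous_map (top_of_set N) (quot_space N L)
          (\<lambda>x. if x \<in> L then None else quot_proj L (f x))"
  proof (rule continuous_map_cases)
    show "continuous_map (subtopology (top_of_set N) (top_of_set N closure_of {x. x \<in> L}))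
            (quot_space N L) (\<lambda>x. None)"
      by (simp add: topspace_quot_space quot_carrier_def)
  next
    have "continuous_map (top_of_set C) (top_of_set N) f"
      using filtration_pair_continuous_on[OF assms] filtration_pair_image_closure_subset[OF assms]
        \<open>C \<subseteq> N\<close> by (auto simp: C_def intro: continuous_on_subset)
    then have "continuous_map (top_of_set C) (quot_space N L) (quot_proj L \<circ> f)"
      using continuous_map_quot_proj by (rule continuous_map_compose)
    moreover have "subtopology (top_of_set N) C = top_of_set C"
      using \<open>C \<subseteq> N\<close> by (simp add: subtopology_subtopology Int_absorb1)
    ultimately have "continuous_map (subtopology (top_of_set N) C) (quot_space N L) (quot_proj L \<circ> f)"
      by simp
    moreover have "top_of_set N closure_of {x. x \<notin> L} \<subseteq> C"
      by (simp add: closure_of_subtopology C_def Diff_eq Compl_eq)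
    ultimately show "continuous_map (subtopology (top_of_set N) (top_of_set N closure_of {x. x \<notin> L}))
            (quot_space N L) (\<lambda>x. quot_proj L (f x))"
      by (simp add: o_def continuous_map_from_subtopology_mono)
  next
    fix x
    assume "x \<in> top_of_set N frontier_of {x. x \<in> L}"
    then have "x \<in> closure L" "x \<in> C"
      using closure_of_subtopology_subset[of euclidean N]
      by (auto simp: frontier_of_closures C_def set_diff_eq)
    then have "f x \<in> L"
      using filtration_pair_image_frontier[OF assms] \<open>closed L\<close> by (simp add: C_def)
    then show "None = quot_proj L (f x)"
      by (simp add: quot_proj_def)
  qed
  then show "continuous_map (top_of_set N) (quot_space N L) (index_map f L \<circ> quot_proj L)"
    by (simp add: o_def index_map_quot_proj)
qed

lemma base_point_in_interior_of_index_map_fibre: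
  assumes "filtration_pair f U S N L" and "continuous_on U f"
  shows "None \<in> (quot_space N L) interior_of
           {y \<in> topspace (quot_space N L). index_map f L y = None}"
proof -
  define W where "W = N \<inter> f -` (- closure (N - L))"
  have "openin (top_of_set N) W"
    unfolding W_def
    by (rule continuous_openin_preimage_gen)
       (simp_all add: filtration_pair_continuous_on[OF assms] open_Compl)
  moreover have "L \<subseteq> W"
    using assms(1) by (auto simp: filtration_pair_def W_def)
  ultimately have "openin (quot_space N L) (insert None (Some ` (W - L)))"
    by (rule openin_quot_space_collapse)
  moreover have "f x \<in> L" if "x \<in> W - L" for x
  proof -
    have "f x \<in> N"
      using that filtration_pair_image_in_interior[OF assms(1)] interior_subset by (auto simp: W_def)
    with that show ?thesis
      using closure_subset[of "N - L"] by (auto simp: W_def)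
  qed
  then have "insert None (Some ` (W - L)) \<subseteq>
      {y \<in> topspace (quot_space N L). index_map f L y = None}"
    by (auto simp: topspace_quot_space quot_carrier_def index_map_def quot_proj_def W_def)
  ultimately have "insert None (Some ` (W - L)) \<subseteq> (quot_space N L) interior_of
      {y \<in> topspace (quot_space N L). index_map f L y = None}"
    by (intro interior_of_maximal)
  then show ?thesis
    by blast
qed

theorem mainTheorem4:
  fixes f :: "'a::metric_space \<Rightarrow> 'a" and U S N L :: "'a set"
  assumes "locally compact (UNIV :: 'a set)"
    and "open U" and "continuous_on U f"
    and "filtration_pair f U S N L"
  shows "f ` (N - L) \<subseteq> N
    \<and> topspace (quot_space N L) = quot_carrier N L
    \<and> (\<forall>x\<in>N - L. index_map f L (quot_proj L x) = quot_proj L (f x))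
    \<and> index_map f L None = None
    \<and> continuous_map (quot_space N L) (quot_space N L) (index_map f L)
    \<and> None \<in> (quot_space N L) interior_of {y \<in> topspace (quot_space N L). index_map f L y = None}"
proof (intro conjI ballI)
  show "f ` (N - L) \<subseteq> N"
    using filtration_pair_image_in_interior[OF assms(4)] interior_subset by blast
  show "topspace (quot_space N L) = quot_carrier N L"
    by (rule topspace_quot_space)
  show "index_map f L (quot_proj L x) = quot_proj L (f x)" if "x \<in> N - L" for x
    using that by (simp add: index_map_quot_proj)
  show "index_map f L None = None"
    by (simp add: index_map_def)
  show "continuous_map (quot_space N L) (quot_space N L) (index_map f L)"
    using assms(4,3) by (rule continuous_map_index_map)
  show "None \<in> (quot_space N L) interior_of
          {y \<in> topspace (quot_space N L). index_map f L y = None}"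
    using assms(4,3) by (rule base_point_in_interior_of_index_map_fibre)
qed

end
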